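(* Let $\varepsilon>0$ and let $\mathcal Q$ be either the Laplace gradient mechanism or the projected random sign (PRS) mechanism (both defined below, with parameters $C>0$ and $1\le\hat d\le d$). Consider the algorithm PGC-A3C: there are $N$ agents, agent $n$ having a private environment parameter $\psi_n\in\Psi$ determining its local transition dynamics; the central aggregator holds global parameters $\theta\in\mathbb{R}^d$ (initialized independently of the agents) and a buffer $B$ (initially empty). Each agent $n$ (submitting exactly once; submissions are received in order $n=1,\dots,N$) copies the current global parameters $\theta'\leftarrow\theta$ (which are a function of previously received reports only), runs an episode in its own environment, computes a gradient $\mathbf g_n\in\mathbb{R}^d$ of its empirical loss at $\theta'$ (so the conditional law of $\mathbf g_n$ given everything previously received depends only on $\psi_n$ and $\theta'$), and sends $\tilde{\mathbf g}_n=\mathcal Q(\mathbf g_n)$ computed with fresh randomness. The aggregator adds $\tilde{\mathbf g}_n$ to $B$ and, whenever $|B|$ reaches a fixed maximum size, updates $\theta\leftarrow\theta-\eta\frac1{|B|}\sum_{\tilde{\mathbf g}\in B}\tilde{\mathbf g}$ ($\eta>0$) and clears $B$. Then PGC-A3C satisfies $\varepsilon$-LDP for all local agents: for each $n$, each fixed $(\psi_m)_{m\ne n}$, all $\psi,\psi'\in\Psi$ and every measurable event $E$ concerning all reports $\tilde{\mathbf g}_1,\dots,\tilde{\mathbf g}_N$ and all global parameters computed by the aggregator, $\Pr(E\mid\psi_n=\psi)\le e^{\varepsilon}\Pr(E\mid\psi_n=\psi')$; in particular each report satisfies $\Pr(\tilde{\mathbf g}_n\in G\mid\psi_n=\psi,\tilde{\mathbf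 g}_1,\dots,\tilde{\mathbf g}_{n-1})\le e^{\varepsilon}\Pr(\tilde{\mathbf g}_n\in G\mid\psi_n=\psi',\tilde{\mathbf g}_1,\dots,\tilde{\mathbf g}_{n-1})$ for all measurable $G\subseteq\mathbb{R}^d$.
   Context: Laplace gradient mechanism: $\mathcal Q(\mathbf g)=\bar{\mathbf g}+\mathbf z$ with $\bar{\mathbf g}=\mathbf g/\max\{1,\|\mathbf g\|_1/(C/2)\}$ and $\mathbf z$ having i.i.d. coordinates of density $\frac{\varepsilon}{2C}\exp(-\frac{\varepsilon}{C}|z|)$. PRS mechanism: draw $\mathbf M\in\mathbb{R}^{\hat d\times d}$ with i.i.d. entries $-\sqrt3$ (prob. $1/6$), $0$ (prob. $2/3$), $+\sqrt3$ (prob. $1/6$); set $\mathbf u=\mathbf M\mathbf g$, $\bar u_i=\min\{C,\max\{-C,u_i\}\}$, and independently $\tilde u_i=+C$ with probability $\frac{1}{e^{\varepsilon/\hat d}+1}+\frac{\bar u_i+C}{2C}\frac{e^{\varepsilon/\hat d}-1}{e^{\varepsilon/\hat d}+1}$, else $-C$; output $\mathbf M^\top\tilde{\mathbf u}$. All mechanism randomness is independent of everything else. The specific form of the empirical A3C loss used to compute $\mathbf g_n$ is irrelevant to the claim beyond the stated dependence structure. *)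

theory Defs
  imports "HOL-Probability.Probability"
begin

definition l1_clip :: "real \<Rightarrow> real^'d \<Rightarrow> real^'d" where
  "l1_clip C g = (1 / max 1 ((\<Sum>i\<in>UNIV. \<bar>g $ i\<bar>) / (C / 2))) *\<^sub>R g"

definition laplace_mech :: "real \<Rightarrow> real \<Rightarrow> real^'d \<Rightarrow> (real^'d) measure" where
  "laplace_mech C \<epsilon> g = density lborel
     (\<lambda>z. ennreal (\<Prod>i\<in>UNIV. \<epsilon> / (2 * C) * exp (- (\<epsilon> / C) * \<bar>z $ i - l1_clip C g $ i\<bar>)))"

definition prs_entry_pmf :: "real pmf" where
  "prs_entry_pmf = map_pmf (\<lambda>k::nat. if k = 0 then - sqrt 3 else if k = 5 then sqrt 3 else 0)
                     (pmf_of_set {0..<6})"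

text \<open>Random projection matrix with 'k rows (hat d = CARD('k)) and 'd columns, i.i.d. entries.\<close>
definition prs_matrix_pmf :: "(real^'d^'k) pmf" where
  "prs_matrix_pmf = map_pmf (\<lambda>f. \<chi> i j. f (i, j)) (Pi_pmf UNIV 0 (\<lambda>_. prs_entry_pmf))"

definition prs_prob :: "real \<Rightarrow> real \<Rightarrow> nat \<Rightarrow> real \<Rightarrow> real" where
  "prs_prob C \<epsilon> dh ub = 1 / (exp (\<epsilon> / real dh) + 1)
      + (ub + C) / (2 * C) * ((exp (\<epsilon> / real dh) - 1) / (exp (\<epsilon> / real dh) + 1))"

definition prs_signs_pmf :: "('k::finite) itself \<Rightarrow> real \<Rightarrow> real \<Rightarrow> real^'k \<Rightarrow> (real^'k) pmf" where
  "prs_signs_pmf _ C \<epsilon> u = map_pmf (\<lambda>f. \<chi> i. f i)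
     (Pi_pmf UNIV 0 (\<lambda>i. map_pmf (\<lambda>b. if b then C else - C)
        (bernoulli_pmf (prs_prob C \<epsilon> CARD('k) (min C (max (- C) (u $ i)))))))"

definition prs_mech :: "('k::finite) itself \<Rightarrow> real \<Rightarrow> real \<Rightarrow> real^'d \<Rightarrow> (real^'d) measure" where
  "prs_mech k C \<epsilon> g = measure_pmf
     (prs_matrix_pmf \<bind> (\<lambda>M :: real^'d^'k.
        prs_signs_pmf k C \<epsilon> (M *v g) \<bind> (\<lambda>ut. return_pmf (transpose M *v ut))))"

text \<open>State: (global parameters, buffer). Add a report; if the buffer reaches size bmax,
  take a gradient step with the buffer average and clear the buffer.\<close>
definition agg_step :: "nat \<Rightarrow> real \<Rightarrow> ((real^'d) \<times> (real^'d) list) \<Rightarrow> real^'d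
                          \<Rightarrow> ((real^'d) \<times> (real^'d) list)" where
  "agg_step bmax \<eta> s g = (let B' = snd s @ [g] in
     if length B' = bmax then (fst s - (\<eta> / real (length B')) *\<^sub>R sum_list B', [])
     else (fst s, B'))"

primrec agg_run :: "nat \<Rightarrow> real \<Rightarrow> real^'d \<Rightarrow> (nat \<Rightarrow> real^'d) \<Rightarrow> nat
                      \<Rightarrow> ((real^'d) \<times> (real^'d) list)" where
  "agg_run bmax \<eta> \<theta>0 r 0 = (\<theta>0, [])"
| "agg_run bmax \<eta> \<theta>0 r (Suc n) = agg_step bmax \<eta> (agg_run bmax \<eta> \<theta>0 r n) (r (Suc n))"

definition hist_space :: "((real^'d) \<times> (nat \<Rightarrow> real^'d)) measure" where
  "hist_space = borel \<Otimes>\<^sub>M (\<Pi>\<^sub>M i\<in>UNIV. borel)"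

text \<open>Joint law of (theta_0, reports) after n submissions; reports are stored at indices 1..n,
  all other entries are 0. Agent m draws its gradient from K m (psi m) theta' where theta' is
  the current global parameter, and reports Q applied to it with fresh randomness.\<close>
primrec pgc_hist :: "(real^'d) measure \<Rightarrow> (nat \<Rightarrow> 'psi \<Rightarrow> real^'d \<Rightarrow> (real^'d) measure)
     \<Rightarrow> (real^'d \<Rightarrow> (real^'d) measure) \<Rightarrow> nat \<Rightarrow> real \<Rightarrow> (nat \<Rightarrow> 'psi) \<Rightarrow> nat
     \<Rightarrow> ((real^'d) \<times> (nat \<Rightarrow> real^'d)) measure" where
  "pgc_hist init K Q bmax \<eta> \<psi> 0 = distr init hist_space (\<lambda>\<theta>. (\<theta>, \<lambda>_. 0))"
| "pgc_hist init K Q bmax \<eta> \<psi> (Suc n) =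
     pgc_hist init K Q bmax \<eta> \<psi> n \<bind> (\<lambda>h.
       distr (K (Suc n) (\<psi> (Suc n)) (fst (agg_run bmax \<eta> (fst h) (snd h) n)) \<bind> Q)
             hist_space (\<lambda>g. (fst h, (snd h)(Suc n := g))))"

definition pgc_space :: "((real^'d) \<times> (nat \<Rightarrow> real^'d) \<times> (nat \<Rightarrow> real^'d)) measure" where
  "pgc_space = borel \<Otimes>\<^sub>M (\<Pi>\<^sub>M i\<in>UNIV. borel) \<Otimes>\<^sub>M (\<Pi>\<^sub>M i\<in>UNIV. borel)"

text \<open>Full transcript: (initial parameters, all reports, all global parameters theta_m,
  m = 0..N, i.e. parameters held after m submissions).\<close>
definition pgc_transcript :: "(real^'d) measure \<Rightarrow> (nat \<Rightarrow> 'psi \<Rightarrow> real^'d \<Rightarrow> (real^'d) measure)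
     \<Rightarrow> (real^'d \<Rightarrow> (real^'d) measure) \<Rightarrow> nat \<Rightarrow> real \<Rightarrow> (nat \<Rightarrow> 'psi) \<Rightarrow> nat
     \<Rightarrow> ((real^'d) \<times> (nat \<Rightarrow> real^'d) \<times> (nat \<Rightarrow> real^'d)) measure" where
  "pgc_transcript init K Q bmax \<eta> \<psi> N = distr (pgc_hist init K Q bmax \<eta> \<psi> N) pgc_space
     (\<lambda>h. (fst h, snd h, \<lambda>m. if m \<le> N then fst (agg_run bmax \<eta> (fst h) (snd h) m) else 0))"

end

theory Submission
  imports Defs
begin

text \<open>Both mechanisms are \<open>\<epsilon>\<close>-private uniformly in their input: the output laws at any two
  gradients differ at most by the factor \<open>exp \<epsilon>\<close>. For the Laplace mechanism this holds because
  clipping bounds the \<open>l\<^sub>1\<close>-distance of any two clipped gradients by \<open>C\<close>; for the PRS mechanism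
  each of the \<open>CARD('k)\<close> randomized-response signs contributes a factor \<open>exp (\<epsilon> / CARD('k))\<close>,
  and the random projection is a common mixture. Hence agent \<open>n\<close>'s report kernel is
  \<open>exp \<epsilon>\<close>-dominated whatever the law of its gradient. The transcript is generated by successive
  kernels: before agent \<open>n\<close> the two protocols coincide, and every later step, the aggregator and
  the read-out of the global parameters are the same measurable post-processing in both, which
  preserves the bound.\<close>

section \<open>Measures with bounded likelihood ratio\<close>

definition measure_ratio_le :: "ennreal \<Rightarrow> 'a measure \<Rightarrow> 'a measure \<Rightarrow> bool" where
  "measure_ratio_le c M N \<longleftrightarrow> (\<forall>A\<in>sets M. emeasure M A \<le> c * emeasure N A)"

lemma measure_ratio_leI:
  "(\<And>A. A \<in> sets M \<Longrightarrow> emeasure M A \<le> c * emeasure N A) \<Longrightarrow> measure_ratio_le c M N"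
  unfolding measure_ratio_le_def by blast

lemma measure_ratio_leD:
  "measure_ratio_le c M N \<Longrightarrow> A \<in> sets M \<Longrightarrow> emeasure M A \<le> c * emeasure N A"
  unfolding measure_ratio_le_def by blast

lemma nn_integral_le_scaled:
  assumes ratio: "measure_ratio_le c M N" and sets: "sets M = sets N"
    and f: "f \<in> borel_measurable N"
  shows "(\<integral>\<^sup>+x. f x \<partial>M) \<le> c * (\<integral>\<^sup>+x. f x \<partial>N)"
proof -
  have "emeasure M A \<le> emeasure (scale_measure c N) A" for A
    using ratio by (cases "A \<in> sets M") (auto simp: measure_ratio_le_def emeasure_notin_sets)
  then have "M \<le> scale_measure c N"
    using sets sets_eq_imp_space_eq[OF sets] by (simp add: le_measure_iff le_fun_def space_scale_measure)
  then have "(\<integral>\<^sup>+x. f x \<partial>M) \<le> (\<integral>\<^sup>+x. f x \<partial>scale_measure c N)"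
    by (rule nn_integral_mono_measure[rotated]) (simp add: sets)
  also have "\<dots> = c * (\<integral>\<^sup>+x. f x \<partial>N)"
    by (rule nn_integral_scale_measure[OF f])
  finally show ?thesis .
qed

lemma measure_ratio_le_density:
  assumes "f \<in> borel_measurable M" "g \<in> borel_measurable M"
    and le: "\<And>x. x \<in> space M \<Longrightarrow> f x \<le> c * g x"
  shows "measure_ratio_le c (density M f) (density M g)"
proof (rule measure_ratio_leI)
  fix A assume "A \<in> sets (density M f)"
  then have A: "A \<in> sets M" by simp
  have "emeasure (density M f) A = (\<integral>\<^sup>+x. f x * indicator A x \<partial>M)"
    using assms(1) A by (rule emeasure_density)
  also have "\<dots> \<le> (\<integral>\<^sup>+x. c * (g x * indicator A x) \<partial>M)"
    using le by (intro nn_integral_mono) (auto simp: mult.assoc[symmetric] mult_right_mono)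
  also have "\<dots> = c * emeasure (density M g) A"
    using assms(2) A by (simp add: nn_integral_cmult emeasure_density)
  finally show "emeasure (density M f) A \<le> c * emeasure (density M g) A" .
qed

lemma measure_ratio_le_pmf:
  assumes "\<And>x. pmf p x \<le> c * pmf q x" and "c \<ge> 0"
  shows "measure_ratio_le (ennreal c) (measure_pmf p) (measure_pmf q)"
  unfolding measure_pmf_eq_density
  by (rule measure_ratio_le_density) (use assms in \<open>auto simp: ennreal_mult[symmetric] intro: ennreal_leI\<close>)

lemma measure_ratio_le_map_pmf:
  "measure_ratio_le c (measure_pmf p) (measure_pmf q) \<Longrightarrow>
     measure_ratio_le c (measure_pmf (map_pmf f p)) (measure_pmf (map_pmf f q))"
  by (simp add: measure_ratio_le_def)

lemma measure_ratio_le_distr: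
  assumes ratio: "measure_ratio_le c M N" and sets: "sets M = sets N" and f: "f \<in> N \<rightarrow>\<^sub>M T"
  shows "measure_ratio_le c (distr M T f) (distr N T f)"
proof (rule measure_ratio_leI)
  fix A assume "A \<in> sets (distr M T f)"
  then have A: "A \<in> sets T" by simp
  have fM: "f \<in> M \<rightarrow>\<^sub>M T" using f sets by (simp cong: measurable_cong_sets)
  have "f -` A \<inter> space M \<in> sets M" using fM A by (rule measurable_sets)
  then show "emeasure (distr M T f) A \<le> c * emeasure (distr N T f) A"
    using ratio A fM f sets_eq_imp_space_eq[OF sets]
    by (simp add: emeasure_distr measure_ratio_leD)
qed

lemma measure_ratio_le_bind_left:
  assumes ratio: "measure_ratio_le c M1 M2" and sets: "sets M1 = sets S" "sets M2 = sets S"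
    and "space S \<noteq> {}" and N: "N \<in> S \<rightarrow>\<^sub>M subprob_algebra R"
  shows "measure_ratio_le c (M1 \<bind> N) (M2 \<bind> N)"
proof (rule measure_ratio_leI)
  have N1: "N \<in> M1 \<rightarrow>\<^sub>M subprob_algebra R" and N2: "N \<in> M2 \<rightarrow>\<^sub>M subprob_algebra R"
    using N sets by (simp_all cong: measurable_cong_sets)
  have ne: "space M1 \<noteq> {}" "space M2 \<noteq> {}"
    using \<open>space S \<noteq> {}\<close> sets by (metis sets_eq_imp_space_eq)+
  fix X assume "X \<in> sets (M1 \<bind> N)"
  then have X: "X \<in> sets R" using sets_bind_measurable[OF N1 ne(1)] by simp
  have "emeasure (M1 \<bind> N) X = \<integral>\<^sup>+x. emeasure (N x) X \<partial>M1"
    by (rule emeasure_bind[OF ne(1) N1 X])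
  also have "\<dots> \<le> c * \<integral>\<^sup>+x. emeasure (N x) X \<partial>M2"
    using ratio sets N2 X by (intro nn_integral_le_scaled) auto
  also have "\<dots> = c * emeasure (M2 \<bind> N) X"
    by (simp add: emeasure_bind[OF ne(2) N2 X])
  finally show "emeasure (M1 \<bind> N) X \<le> c * emeasure (M2 \<bind> N) X" .
qed

lemma measure_ratio_le_bind_right:
  assumes ne: "space M \<noteq> {}"
    and N1: "N1 \<in> M \<rightarrow>\<^sub>M subprob_algebra R" and N2: "N2 \<in> M \<rightarrow>\<^sub>M subprob_algebra R"
    and ratio: "\<And>x. x \<in> space M \<Longrightarrow> measure_ratio_le c (N1 x) (N2 x)"
  shows "measure_ratio_le c (M \<bind> N1) (M \<bind> N2)"
proof (rule measure_ratio_leI)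
  fix X assume "X \<in> sets (M \<bind> N1)"
  then have X: "X \<in> sets R" using sets_bind_measurable[OF N1 ne] by simp
  have "emeasure (M \<bind> N1) X = \<integral>\<^sup>+x. emeasure (N1 x) X \<partial>M"
    by (rule emeasure_bind[OF ne N1 X])
  also have "\<dots> \<le> \<integral>\<^sup>+x. c * emeasure (N2 x) X \<partial>M"
    using ratio X sets_kernel[OF N1] by (intro nn_integral_mono) (auto simp: measure_ratio_leD)
  also have "\<dots> = c * emeasure (M \<bind> N2) X"
    using N2 X by (simp add: nn_integral_cmult emeasure_bind[OF ne N2 X])
  finally show "emeasure (M \<bind> N1) X \<le> c * emeasure (M \<bind> N2) X" .
qed

text \<open>Since the bound holds between any two inputs, it survives averaging over arbitrary input
  laws.\<close>
lemma measure_ratio_le_bind_uniform: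
  assumes "prob_space M1" "prob_space M2" and sets: "sets M1 = sets S" "sets M2 = sets S"
    and N: "N \<in> S \<rightarrow>\<^sub>M subprob_algebra R"
    and ratio: "\<And>x y. x \<in> space S \<Longrightarrow> y \<in> space S \<Longrightarrow> measure_ratio_le c (N x) (N y)"
  shows "measure_ratio_le c (M1 \<bind> N) (M2 \<bind> N)"
proof (rule measure_ratio_leI)
  interpret M1: prob_space M1 by fact
  interpret M2: prob_space M2 by fact
  have N1: "N \<in> M1 \<rightarrow>\<^sub>M subprob_algebra R" and N2: "N \<in> M2 \<rightarrow>\<^sub>M subprob_algebra R"
    using N sets by (simp_all cong: measurable_cong_sets)
  have space: "space M1 = space S" "space M2 = space S"
    using sets by (metis sets_eq_imp_space_eq)+
  fix X assume "X \<in> sets (M1 \<bind> N)"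
  then have X: "X \<in> sets R" using sets_bind_measurable[OF N1 M1.not_empty] by simp
  define L where "L = emeasure (M1 \<bind> N) X"
  have L_le: "L \<le> c * emeasure (N y) X" if "y \<in> space S" for y
  proof -
    have "L = \<integral>\<^sup>+x. emeasure (N x) X \<partial>M1"
      unfolding L_def by (rule emeasure_bind[OF M1.not_empty N1 X])
    also have "\<dots> \<le> \<integral>\<^sup>+x. c * emeasure (N y) X \<partial>M1"
      using ratio that X space sets_kernel[OF N]
      by (intro nn_integral_mono) (auto simp: measure_ratio_leD)
    also have "\<dots> = c * emeasure (N y) X"
      by (simp add: M1.emeasure_space_1)
    finally show ?thesis .
  qed
  have "L = \<integral>\<^sup>+y. L \<partial>M2" by (simp add: M2.emeasure_space_1)
  also have "\<dots> \<le> \<integral>\<^sup>+y. c * emeasure (N y) X \<partial>M2"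
    using L_le space by (intro nn_integral_mono) auto
  also have "\<dots> = c * emeasure (M2 \<bind> N) X"
    using N2 X by (simp add: nn_integral_cmult emeasure_bind[OF M2.not_empty N2 X])
  finally show "emeasure (M1 \<bind> N) X \<le> c * emeasure (M2 \<bind> N) X" unfolding L_def .
qed

section \<open>The protocol as a sequence of kernels\<close>

lemma borel_measurable_sum_list_map[measurable]:
  fixes f :: "'i \<Rightarrow> 'a \<Rightarrow> 'b::{second_countable_topology, topological_monoid_add}"
  assumes [measurable]: "\<And>i. f i \<in> borel_measurable M"
  shows "(\<lambda>x. sum_list (map (\<lambda>i. f i x) L)) \<in> borel_measurable M"
  by (induction L) simp_all

type_synonym 'd history = "(real^'d) \<times> (nat \<Rightarrow> real^'d)"

lemma measurable_history_fst[measurable]: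
  "(\<lambda>h. fst h) \<in> borel_measurable (hist_space :: 'd::finite history measure)"
  unfolding hist_space_def by measurable

lemma measurable_history_snd[measurable]:
  "(\<lambda>h. snd h) \<in> (hist_space :: 'd::finite history measure) \<rightarrow>\<^sub>M (\<Pi>\<^sub>M i\<in>UNIV. borel)"
  unfolding hist_space_def by measurable

lemma measurable_history_report[measurable]:
  "(\<lambda>h. snd h j) \<in> borel_measurable (hist_space :: 'd::finite history measure)"
  unfolding hist_space_def by measurable

lemma space_hist_space_not_empty: "space (hist_space :: 'd::finite history measure) \<noteq> {}"
  by (simp add: hist_space_def space_pair_measure space_PiM)

text \<open>Which reports sit in the buffer depends only on \<open>n\<close>, not on their values; this makes the
  global parameters a measurable function of the history.\<close>
lemma agg_run_buffer:
  "\<exists>L. \<forall>\<theta>0 (r :: nat \<Rightarrow> real^'d). snd (agg_run bmax \<eta> \<theta>0 r n) = map r L"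
proof (induction n)
  case 0
  show ?case by simp
next
  case (Suc n)
  then obtain L where "\<And>\<theta>0 (r :: nat \<Rightarrow> real^'d). snd (agg_run bmax \<eta> \<theta>0 r n) = map r L"
    by blast
  then show ?case
    by (intro exI[of _ "if length L + 1 = bmax then [] else L @ [Suc n]"])
      (simp add: agg_step_def Let_def)
qed

lemma measurable_agg_run_params[measurable]:
  "(\<lambda>h. fst (agg_run bmax \<eta> (fst h) (snd h) n)) \<in> borel_measurable (hist_space :: 'd::finite history measure)"
proof (induction n)
  case 0
  show ?case by simp
next
  case (Suc n)
  obtain L where L: "\<And>\<theta>0 (r :: nat \<Rightarrow> real^'d). snd (agg_run bmax \<eta> \<theta>0 r n) = map r L"
    using agg_run_buffer by blast
  have "fst (agg_run bmax \<eta> \<theta>0 r (Suc n)) =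
      (if length L + 1 = bmax
       then fst (agg_run bmax \<eta> \<theta>0 r n) - (\<eta> / real bmax) *\<^sub>R sum_list (map r (L @ [Suc n]))
       else fst (agg_run bmax \<eta> \<theta>0 r n))" for \<theta>0 and r :: "nat \<Rightarrow> real^'d"
    by (simp add: agg_step_def Let_def L)
  then show ?case
    using Suc by simp measurable
qed

lemma measurable_report_update:
  assumes "sets (borel :: (real^'d::finite) measure) \<subseteq> sets R"
  shows "(\<lambda>(h, g). (fst h, (snd h)(k := g)))
    \<in> (hist_space :: 'd history measure) \<Otimes>\<^sub>M R \<rightarrow>\<^sub>M hist_space"
proof -
  have [measurable]: "(\<lambda>g. g) \<in> R \<rightarrow>\<^sub>M (borel :: (real^'d) measure)"
    using assms by (auto simp: measurable_def)
  have "(\<lambda>x. (snd (fst x))(k := snd x))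
      \<in> (hist_space :: 'd history measure) \<Otimes>\<^sub>M R \<rightarrow>\<^sub>M (\<Pi>\<^sub>M i\<in>UNIV. borel)"
    by (rule measurable_fun_upd[where J=UNIV]) measurable
  then show ?thesis
    unfolding hist_space_def case_prod_beta by measurable
qed

definition pgc_step :: "(nat \<Rightarrow> 'psi \<Rightarrow> real^'d \<Rightarrow> (real^'d) measure)
    \<Rightarrow> (real^'d \<Rightarrow> (real^'d) measure) \<Rightarrow> nat \<Rightarrow> real \<Rightarrow> 'psi \<Rightarrow> nat
    \<Rightarrow> 'd::finite history \<Rightarrow> 'd history measure" where
  "pgc_step K Q bmax \<eta> p m h =
     distr (K (Suc m) p (fst (agg_run bmax \<eta> (fst h) (snd h) m)) \<bind> Q) hist_space
       (\<lambda>g. (fst h, (snd h)(Suc m := g)))"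

lemma pgc_hist_Suc:
  "pgc_hist init K Q bmax \<eta> \<psi> (Suc m) = pgc_hist init K Q bmax \<eta> \<psi> m \<bind> pgc_step K Q bmax \<eta> (\<psi> (Suc m)) m"
  unfolding pgc_step_def[abs_def] by simp

lemma pgc_hist_cong:
  "(\<And>k. 0 < k \<Longrightarrow> k \<le> m \<Longrightarrow> \<psi> k = \<psi>' k) \<Longrightarrow>
     pgc_hist init K Q bmax \<eta> \<psi> m = pgc_hist init K Q bmax \<eta> \<psi>' m"
  by (induction m) simp_all

lemma measurable_transcript:
  "(\<lambda>h. (fst h, snd h, \<lambda>m. if m \<le> N then fst (agg_run bmax \<eta> (fst h) (snd h) m) else 0))
    \<in> (hist_space :: 'd::finite history measure) \<rightarrow>\<^sub>M pgc_space"
proof -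
  have "(\<lambda>h m. if m \<le> N then fst (agg_run bmax \<eta> (fst h) (snd h) m) else 0)
      \<in> (hist_space :: 'd history measure) \<rightarrow>\<^sub>M (\<Pi>\<^sub>M i\<in>UNIV. borel)"
    by (rule measurable_PiM_single') simp_all
  then show ?thesis unfolding pgc_space_def by measurable
qed

locale pgc_kernels =
  fixes K :: "nat \<Rightarrow> 'psi \<Rightarrow> real^'d::finite \<Rightarrow> (real^'d) measure"
    and Q :: "real^'d \<Rightarrow> (real^'d) measure" and R :: "(real^'d) measure"
  assumes K: "\<And>m p. K m p \<in> borel \<rightarrow>\<^sub>M prob_algebra borel"
    and Q: "Q \<in> borel \<rightarrow>\<^sub>M subprob_algebra R"
    and sets_R: "sets (borel :: (real^'d) measure) \<subseteq> sets R"
begin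

lemma measurable_pgc_step: "pgc_step K Q bmax \<eta> p m \<in> hist_space \<rightarrow>\<^sub>M subprob_algebra hist_space"
proof -
  have "(\<lambda>h. K (Suc m) p (fst (agg_run bmax \<eta> (fst h) (snd h) m)) \<bind> Q)
      \<in> hist_space \<rightarrow>\<^sub>M subprob_algebra R"
    by (rule measurable_compose[OF measurable_agg_run_params
          measurable_bind2[OF measurable_prob_algebraD[OF K] Q]])
  then show ?thesis
    unfolding pgc_step_def
    by (rule measurable_distr2[rotated]) (use measurable_report_update[OF sets_R] in simp)
qed

lemma sets_pgc_hist:
  assumes "sets init = sets borel"
  shows "sets (pgc_hist init K Q bmax \<eta> \<psi> m) = sets hist_space"
proof (induction m)
  case 0
  show ?case by simp
next
  case (Suc m)
  have "pgc_step K Q bmax \<eta> (\<psi> (Suc m)) m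
      \<in> pgc_hist init K Q bmax \<eta> \<psi> m \<rightarrow>\<^sub>M subprob_algebra hist_space"
    using measurable_pgc_step Suc by (simp cong: measurable_cong_sets)
  moreover have "space (pgc_hist init K Q bmax \<eta> \<psi> m) \<noteq> {}"
    using Suc space_hist_space_not_empty sets_eq_imp_space_eq by metis
  ultimately show ?case
    unfolding pgc_hist_Suc by (rule sets_bind_measurable)
qed

lemma prob_space_K: "prob_space (K m p \<theta>)" and sets_K: "sets (K m p \<theta>) = sets borel"
  using measurable_space[OF K, of \<theta> m p] by (simp_all add: space_prob_algebra)

lemma sets_K_bind: "sets (K m p \<theta> \<bind> Q) = sets R"
  using prob_space.not_empty[OF prob_space_K] Q sets_K
  by (intro sets_bind_measurable) (simp_all cong: measurable_cong_sets)

context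
  fixes c :: ennreal
  assumes Q_ratio: "\<And>x y. measure_ratio_le c (Q x) (Q y)"
begin

lemma K_bind_ratio: "measure_ratio_le c (K m p \<theta> \<bind> Q) (K m p' \<theta> \<bind> Q)"
  by (rule measure_ratio_le_bind_uniform[OF prob_space_K prob_space_K sets_K sets_K Q Q_ratio])

lemma pgc_step_ratio:
  "measure_ratio_le c (pgc_step K Q bmax \<eta> p m h) (pgc_step K Q bmax \<eta> p' m h)"
proof -
  have "(\<lambda>g. (fst h, (snd h)(Suc m := g))) \<in> R \<rightarrow>\<^sub>M hist_space"
    using measurable_Pair2[OF measurable_report_update[OF sets_R], of h]
    by (simp add: hist_space_def space_pair_measure space_PiM)
  then show ?thesis
    unfolding pgc_step_def using K_bind_ratio sets_K_bind
    by (intro measure_ratio_le_distr) (simp_all cong: measurable_cong_sets)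
qed

context
  fixes init :: "(real^'d) measure"
  assumes sets_init: "sets init = sets borel"
begin

lemma pgc_hist_ratio:
  assumes "0 < n" and "n \<le> m"
  shows "measure_ratio_le c (pgc_hist init K Q bmax \<eta> (\<psi>(n := a)) m)
           (pgc_hist init K Q bmax \<eta> (\<psi>(n := b)) m)"
  using \<open>n \<le> m\<close>
proof (induction m rule: nat_induct_at_least)
  case base
  obtain k where n: "n = Suc k" using \<open>0 < n\<close> gr0_implies_Suc by blast
  let ?H = "pgc_hist init K Q bmax \<eta> (\<psi>(n := b)) k"
  have same_prefix: "pgc_hist init K Q bmax \<eta> (\<psi>(n := a)) k = ?H"
    using n by (intro pgc_hist_cong) simp
  have not_empty: "space ?H \<noteq> {}"
    using sets_pgc_hist[OF sets_init] space_hist_space_not_empty sets_eq_imp_space_eq by metis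
  have step: "pgc_step K Q bmax \<eta> q k \<in> ?H \<rightarrow>\<^sub>M subprob_algebra hist_space" for q
    using measurable_pgc_step sets_pgc_hist[OF sets_init] by (simp cong: measurable_cong_sets)
  have "measure_ratio_le c (?H \<bind> pgc_step K Q bmax \<eta> a k) (?H \<bind> pgc_step K Q bmax \<eta> b k)"
    by (rule measure_ratio_le_bind_right[OF not_empty step step pgc_step_ratio])
  then show ?case
    unfolding n pgc_hist_Suc using same_prefix n by simp
next
  case (Suc m)
  then have "(\<psi>(n := a)) (Suc m) = \<psi> (Suc m)" "(\<psi>(n := b)) (Suc m) = \<psi> (Suc m)" by simp_all
  then show ?case
    unfolding pgc_hist_Suc by (simp only:) (rule measure_ratio_le_bind_left[OF Suc.IH sets_pgc_hist[OF sets_init]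
          sets_pgc_hist[OF sets_init] space_hist_space_not_empty measurable_pgc_step])
qed

lemma pgc_transcript_ratio:
  assumes "0 < n" and "n \<le> N"
  shows "measure_ratio_le c (pgc_transcript init K Q bmax \<eta> (\<psi>(n := a)) N)
           (pgc_transcript init K Q bmax \<eta> (\<psi>(n := b)) N)"
  unfolding pgc_transcript_def
  by (rule measure_ratio_le_distr[OF pgc_hist_ratio[OF assms]])
    (simp_all add: sets_pgc_hist[OF sets_init] measurable_transcript cong: measurable_cong_sets)

end

end

end

section \<open>The Laplace mechanism\<close>

lemma borel_measurable_vec_nth[measurable]: "(\<lambda>x::real^'n. x $ i) \<in> borel_measurable borel"
  by (intro borel_measurable_continuous_onI continuous_on_component continuous_on_id)

definition laplace_density :: "real \<Rightarrow> real \<Rightarrow> real \<Rightarrow> real" where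
  "laplace_density l m t = l / 2 * exp (- l * \<bar>t - m\<bar>)"

lemma laplace_density_nonneg: "0 \<le> l \<Longrightarrow> 0 \<le> laplace_density l m t"
  by (simp add: laplace_density_def)

lemma laplace_density_ratio:
  assumes "0 \<le> l"
  shows "laplace_density l a t \<le> exp (l * \<bar>a - b\<bar>) * laplace_density l b t"
proof -
  have "- l * \<bar>t - a\<bar> \<le> l * \<bar>a - b\<bar> + - l * \<bar>t - b\<bar>"
    using mult_left_mono[OF abs_triangle_ineq[of "t - a" "a - b"] assms]
    by (simp add: algebra_simps)
  then show ?thesis
    using assms by (simp add: laplace_density_def mult.left_commute exp_add[symmetric] mult_left_mono)
qed

lemma borel_measurable_laplace_density[measurable]: "laplace_density l m \<in> borel_measurable borel"
  unfolding laplace_density_def by measurable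

text \<open>At \<open>t = 0\<close> the right-hand side is twice the left-hand side; the identity holds almost
  everywhere, which is all the integral below needs.\<close>
lemma laplace_density_eq_exponential:
  "t \<noteq> 0 \<Longrightarrow> laplace_density l m (m + t) = (exponential_density l t + exponential_density l (- t)) / 2"
  by (cases t "0 :: real" rule: linorder_cases) (simp_all add: laplace_density_def exponential_density_def)

lemma nn_integral_laplace_density:
  assumes "0 < l"
  shows "(\<integral>\<^sup>+t. ennreal (laplace_density l m t) \<partial>lborel) = 1"
proof -
  let ?E = "\<lambda>t. ennreal (exponential_density l t)"
  have E: "(\<integral>\<^sup>+t. ?E t \<partial>lborel) = 1"
    using prob_space.emeasure_space_1[OF prob_space_exponential_density[OF assms]]
    by (simp add: emeasure_density)
  have "?E \<in> borel_measurable borel"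
    unfolding exponential_density_def by measurable
  then have E_neg: "(\<integral>\<^sup>+t. ?E (- t) \<partial>lborel) = 1"
    using nn_integral_real_affine[of ?E "-1" 0] E by simp
  have "(\<integral>\<^sup>+t. ennreal (laplace_density l m t) \<partial>lborel)
      = (\<integral>\<^sup>+t. ennreal (laplace_density l m (m + t)) \<partial>lborel)"
    using nn_integral_real_affine[of "\<lambda>t. ennreal (laplace_density l m t)" 1 m] by simp
  also have "\<dots> = (\<integral>\<^sup>+t. (?E t + ?E (- t)) / 2 \<partial>lborel)"
  proof (rule nn_integral_cong_AE)
    show "AE t in lborel. ennreal (laplace_density l m (m + t)) = (?E t + ?E (- t)) / 2"
      using AE_lborel_singleton[of 0]
    proof eventually_elim
      case (elim t)
      then show ?case
        using exponential_density_nonneg[OF assms, of t] exponential_density_nonneg[OF assms, of "- t"]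
        by (simp add: laplace_density_eq_exponential ennreal_divide_numeral[symmetric] ennreal_plus)
    qed
  qed
  also have "\<dots> = 1"
    by (simp add: nn_integral_divide nn_integral_add E E_neg)
  finally show ?thesis .
qed

lemma nn_integral_laplace_density_prod:
  fixes a :: "real^'d"
  assumes "0 < l"
  shows "(\<integral>\<^sup>+z. ennreal (\<Prod>i\<in>UNIV. laplace_density l (a $ i) (z $ i)) \<partial>lborel) = 1"
proof -
  let ?f = "\<lambda>(b :: real^'d) t. ennreal (laplace_density l (a \<bullet> b) t)"
  have Basis: "(Basis :: (real^'d) set) = range (\<lambda>i. axis i 1)" and inj: "inj (\<lambda>i::'d. axis i (1::real))"
    by (auto simp: Basis_vec_def inj_on_def axis_eq_axis)
  have "ennreal (\<Prod>i\<in>UNIV. laplace_density l (a $ i) (z $ i)) = (\<Prod>b\<in>Basis. ?f b (z \<bullet> b))" for z :: "real^'d"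
    using assms
    by (simp add: Basis prod.reindex[OF inj] inner_axis prod_ennreal laplace_density_nonneg)
  then have "(\<integral>\<^sup>+z. ennreal (\<Prod>i\<in>UNIV. laplace_density l (a $ i) (z $ i)) \<partial>lborel)
      = (\<integral>\<^sup>+z. (\<Prod>b\<in>Basis. ?f b (z \<bullet> b)) \<partial>lborel)"
    by simp
  also have "\<dots> = (\<Prod>b\<in>Basis. \<integral>\<^sup>+t. ?f b t \<partial>lborel)"
    by (rule nn_integral_lborel_prod) auto
  also have "\<dots> = 1"
    using assms by (simp add: nn_integral_laplace_density)
  finally show ?thesis .
qed

lemma laplace_mech_eq_density:
  "laplace_mech C \<epsilon> g =
     density lborel (\<lambda>z. ennreal (\<Prod>i\<in>UNIV. laplace_density (\<epsilon> / C) (l1_clip C g $ i) (z $ i)))"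
  unfolding laplace_mech_def laplace_density_def by (simp add: mult.commute)

lemma prob_space_laplace_mech:
  assumes "0 < C" "0 < \<epsilon>"
  shows "prob_space (laplace_mech C \<epsilon> g)"
  using nn_integral_laplace_density_prod[of "\<epsilon> / C" "l1_clip C g"] assms
  by (intro prob_spaceI) (simp add: laplace_mech_eq_density emeasure_density)

lemma measurable_laplace_mech:
  assumes "0 < C" "0 < \<epsilon>"
  shows "laplace_mech C \<epsilon> \<in> borel \<rightarrow>\<^sub>M subprob_algebra (borel :: (real^'d) measure)"
proof (rule measurable_subprob_algebra)
  fix A :: "(real^'d) set" assume [measurable]: "A \<in> sets borel"
  have "(\<lambda>(g, z). ennreal (\<Prod>i\<in>UNIV. laplace_density (\<epsilon> / C) (l1_clip C g $ i) (z $ i)) * indicator A z)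
      \<in> borel_measurable (borel \<Otimes>\<^sub>M lborel)"
    unfolding laplace_density_def l1_clip_def by measurable
  then show "(\<lambda>g. emeasure (laplace_mech C \<epsilon> g) A) \<in> borel_measurable borel"
    using lborel.borel_measurable_nn_integral
    by (simp add: laplace_mech_eq_density emeasure_density)
next
  show "subprob_space (laplace_mech C \<epsilon> g)" for g
    using prob_space_laplace_mech[OF assms] by (rule prob_space_imp_subprob_space)
qed (simp add: laplace_mech_eq_density)

lemma l1_norm_l1_clip_le:
  assumes "0 < C"
  shows "(\<Sum>i\<in>UNIV. \<bar>l1_clip C g $ i\<bar>) \<le> C / 2"
proof -
  let ?S = "\<Sum>i\<in>UNIV. \<bar>g $ i\<bar>"
  let ?m = "max 1 (?S / (C / 2))"
  have "(\<Sum>i\<in>UNIV. \<bar>l1_clip C g $ i\<bar>) = ?S / ?m"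
    by (simp add: l1_clip_def sum_divide_distrib)
  also have "\<dots> \<le> C / 2"
  proof -
    have "?S = C / 2 * (?S / (C / 2))" using assms by simp
    also have "\<dots> \<le> C / 2 * ?m" using assms by (intro mult_left_mono) auto
    finally show ?thesis by (simp add: pos_divide_le_eq mult.commute)
  qed
  finally show ?thesis .
qed

lemma l1_dist_l1_clip_le:
  assumes "0 < C"
  shows "(\<Sum>i\<in>UNIV. \<bar>l1_clip C x $ i - l1_clip C y $ i\<bar>) \<le> C"
proof -
  have "(\<Sum>i\<in>UNIV. \<bar>l1_clip C x $ i - l1_clip C y $ i\<bar>)
      \<le> (\<Sum>i\<in>UNIV. \<bar>l1_clip C x $ i\<bar>) + (\<Sum>i\<in>UNIV. \<bar>l1_clip C y $ i\<bar>)"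
    by (simp add: sum.distrib[symmetric] sum_mono abs_triangle_ineq4)
  also have "\<dots> \<le> C"
    using l1_norm_l1_clip_le[OF assms, of x] l1_norm_l1_clip_le[OF assms, of y] by simp
  finally show ?thesis .
qed

lemma laplace_density_prod_ratio:
  fixes a b z :: "real^'d"
  assumes "0 \<le> l"
  shows "(\<Prod>i\<in>UNIV. laplace_density l (a $ i) (z $ i))
    \<le> exp (l * (\<Sum>i\<in>UNIV. \<bar>a $ i - b $ i\<bar>)) * (\<Prod>i\<in>UNIV. laplace_density l (b $ i) (z $ i))"
proof -
  have "(\<Prod>i\<in>UNIV. laplace_density l (a $ i) (z $ i))
      \<le> (\<Prod>i\<in>UNIV. exp (l * \<bar>a $ i - b $ i\<bar>) * laplace_density l (b $ i) (z $ i))"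
    by (intro prod_mono conjI laplace_density_nonneg laplace_density_ratio assms)
  then show ?thesis
    by (simp add: prod.distrib exp_sum sum_distrib_left)
qed

lemma laplace_mech_ratio:
  assumes "0 < C" "0 < \<epsilon>"
  shows "measure_ratio_le (exp \<epsilon>) (laplace_mech C \<epsilon> x) (laplace_mech C \<epsilon> y)"
proof -
  let ?l = "\<epsilon> / C"
  let ?p = "\<lambda>v z. \<Prod>i\<in>UNIV. laplace_density ?l (l1_clip C v $ i) (z $ i)"
  have l: "0 \<le> ?l" using assms by simp
  have "?l * (\<Sum>i\<in>UNIV. \<bar>l1_clip C x $ i - l1_clip C y $ i\<bar>) \<le> ?l * C"
    using l1_dist_l1_clip_le[OF assms(1)] l by (rule mult_left_mono)
  then have exp_le: "exp (?l * (\<Sum>i\<in>UNIV. \<bar>l1_clip C x $ i - l1_clip C y $ i\<bar>)) \<le> exp \<epsilon>"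
    using assms by simp
  have p_nonneg: "0 \<le> ?p v z" for v z
    using l by (simp add: prod_nonneg laplace_density_nonneg)
  have "?p x z \<le> exp \<epsilon> * ?p y z" for z
    using laplace_density_prod_ratio[OF l, of "l1_clip C x" z "l1_clip C y"]
      mult_right_mono[OF exp_le p_nonneg[of y z]]
    by linarith
  then have "ennreal (?p x z) \<le> ennreal (exp \<epsilon>) * ennreal (?p y z)" for z
    using p_nonneg[of y z] by (simp add: ennreal_mult[symmetric] ennreal_leI)
  then show ?thesis
    unfolding laplace_mech_eq_density
    by (intro measure_ratio_le_density) (simp_all add: laplace_density_def)
qed

section \<open>The projected random sign mechanism\<close>

lemma measurable_emeasure_pmf_finite_support:
  assumes "finite S" and "\<And>x. x \<in> space M \<Longrightarrow> set_pmf (p x) \<subseteq> S"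
    and "\<And>y. y \<in> S \<Longrightarrow> (\<lambda>x. pmf (p x) y) \<in> borel_measurable M"
  shows "(\<lambda>x. emeasure (measure_pmf (p x)) A) \<in> borel_measurable M"
proof -
  have "emeasure (measure_pmf (p x)) A = (\<Sum>y\<in>A \<inter> S. ennreal (pmf (p x) y))" if "x \<in> space M" for x
  proof -
    have "A \<inter> S \<inter> set_pmf (p x) = A \<inter> set_pmf (p x)"
      using assms(2)[OF that] by blast
    then have "emeasure (measure_pmf (p x)) A = emeasure (measure_pmf (p x)) (A \<inter> S)"
      by (metis emeasure_Int_set_pmf)
    then show ?thesis
      using assms(1) by (simp add: emeasure_measure_pmf_finite)
  qed
  then show ?thesis
    using assms(3) by (subst measurable_cong) (auto intro!: borel_measurable_sum)
qed

definition sign_pmf :: "real \<Rightarrow> real \<Rightarrow> real pmf" where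
  "sign_pmf C q = map_pmf (\<lambda>b. if b then C else - C) (bernoulli_pmf q)"

definition prs_sign_prob :: "real \<Rightarrow> real \<Rightarrow> real^'k::finite \<Rightarrow> 'k \<Rightarrow> real" where
  "prs_sign_prob C \<epsilon> u i = prs_prob C \<epsilon> CARD('k) (min C (max (- C) (u $ i)))"

lemma prs_signs_pmf_eq:
  "prs_signs_pmf TYPE('k::finite) C \<epsilon> u =
     map_pmf (\<lambda>f. \<chi> i. f i) (Pi_pmf UNIV 0 (\<lambda>i::'k. sign_pmf C (prs_sign_prob C \<epsilon> u i)))"
  unfolding prs_signs_pmf_def sign_pmf_def prs_sign_prob_def ..

lemma set_pmf_sign_pmf: "set_pmf (sign_pmf C q) \<subseteq> {C, - C}"
  by (auto simp: sign_pmf_def)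

lemma pmf_sign_pmf:
  assumes "0 < C" and "0 \<le> q" "q \<le> 1"
  shows "pmf (sign_pmf C q) v = (if v = C then q else if v = - C then 1 - q else 0)"
proof -
  have inj: "inj (\<lambda>b. if b then C else - C)"
    using assms(1) by (auto simp: inj_on_def split: if_splits)
  consider "v = C" | "v = - C" | "v \<noteq> C" "v \<noteq> - C" by blast
  then show ?thesis
  proof cases
    case 1
    then show ?thesis using pmf_map_inj'[OF inj, of _ True] assms by (simp add: sign_pmf_def)
  next
    case 2
    then show ?thesis using pmf_map_inj'[OF inj, of _ False] assms by (simp add: sign_pmf_def)
  next
    case 3
    then have "v \<notin> set_pmf (sign_pmf C q)" using set_pmf_sign_pmf by blast
    with 3 show ?thesis by (simp add: pmf_eq_0_set_pmf)
  qed
qed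

lemma pmf_sign_pmf_ratio:
  assumes "0 < C" and "1 \<le> x"
    and q1: "1 / (x + 1) \<le> q1" "q1 \<le> x / (x + 1)"
    and q2: "1 / (x + 1) \<le> q2" "q2 \<le> x / (x + 1)"
  shows "pmf (sign_pmf C q1) v \<le> x * pmf (sign_pmf C q2) v"
proof -
  have "0 \<le> 1 / (x + 1)" "x / (x + 1) \<le> 1" using assms(2) by simp_all
  then have probs: "0 \<le> q1" "q1 \<le> 1" "0 \<le> q2" "q2 \<le> 1" using q1 q2 by linarith+
  have "q1 \<le> x * (1 / (x + 1))" using q1(2) by simp
  also have "\<dots> \<le> x * q2" using q2(1) assms(2) by (intro mult_left_mono) auto
  finally have plus: "q1 \<le> x * q2" .
  have "1 - q1 \<le> x * (1 - x / (x + 1))" using q1(1) assms(2) by (simp add: field_simps)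
  also have "\<dots> \<le> x * (1 - q2)" using q2(2) assms(2) by (intro mult_left_mono) auto
  finally have minus: "1 - q1 \<le> x * (1 - q2)" .
  show ?thesis
    using plus minus by (simp add: pmf_sign_pmf[OF assms(1) probs(1,2)] pmf_sign_pmf[OF assms(1) probs(3,4)])
qed

lemma prs_prob_bounds:
  fixes dh :: nat
  assumes "0 < C" "0 \<le> \<epsilon>" "- C \<le> u" "u \<le> C"
  defines "x \<equiv> exp (\<epsilon> / real dh)"
  shows "1 / (x + 1) \<le> prs_prob C \<epsilon> dh u" and "prs_prob C \<epsilon> dh u \<le> x / (x + 1)"
proof -
  let ?t = "(u + C) / (2 * C)"
  have x: "1 \<le> x" unfolding x_def using assms(2) by simp
  have t: "0 \<le> ?t" "?t \<le> 1" using assms(1,3,4) by simp_all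
  have p: "prs_prob C \<epsilon> dh u = 1 / (x + 1) + ?t * ((x - 1) / (x + 1))"
    unfolding prs_prob_def x_def ..
  have "0 \<le> ?t * ((x - 1) / (x + 1))" using mult_nonneg_nonneg[OF t(1), of "(x - 1) / (x + 1)"] x by simp
  then show "1 / (x + 1) \<le> prs_prob C \<epsilon> dh u" unfolding p by simp
  have "?t * ((x - 1) / (x + 1)) \<le> (x - 1) / (x + 1)"
    using t x by (intro mult_left_le_one_le) simp_all
  then have "prs_prob C \<epsilon> dh u \<le> 1 / (x + 1) + (x - 1) / (x + 1)"
    unfolding p by simp
  also have "\<dots> = x / (x + 1)"
    by (simp flip: add_divide_distrib)
  finally show "prs_prob C \<epsilon> dh u \<le> x / (x + 1)" .
qed

lemma prs_sign_prob_bounds: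
  fixes u :: "real^'k::finite"
  assumes "0 < C" "0 \<le> \<epsilon>"
  defines "x \<equiv> exp (\<epsilon> / real CARD('k))"
  shows "1 / (x + 1) \<le> prs_sign_prob C \<epsilon> u i" and "prs_sign_prob C \<epsilon> u i \<le> x / (x + 1)"
    and "0 \<le> prs_sign_prob C \<epsilon> u i" and "prs_sign_prob C \<epsilon> u i \<le> 1"
proof -
  show lower: "1 / (x + 1) \<le> prs_sign_prob C \<epsilon> u i" and upper: "prs_sign_prob C \<epsilon> u i \<le> x / (x + 1)"
    unfolding prs_sign_prob_def x_def using prs_prob_bounds[OF assms(1,2)] assms(1) by simp_all
  have "0 \<le> 1 / (x + 1)" "x / (x + 1) \<le> 1" unfolding x_def by (simp_all add: add_pos_nonneg)
  with lower upper show "0 \<le> prs_sign_prob C \<epsilon> u i" "prs_sign_prob C \<epsilon> u i \<le> 1" by linarith+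
qed

lemma prs_signs_pmf_ratio:
  assumes "0 < C" "0 \<le> \<epsilon>"
  shows "measure_ratio_le (exp \<epsilon>) (measure_pmf (prs_signs_pmf TYPE('k::finite) C \<epsilon> u1))
           (measure_pmf (prs_signs_pmf TYPE('k) C \<epsilon> u2))"
proof -
  let ?q = "prs_sign_prob C \<epsilon>"
  let ?x = "exp (\<epsilon> / real CARD('k))"
  have "pmf (Pi_pmf UNIV 0 (\<lambda>i. sign_pmf C (?q u1 i))) f
      \<le> exp \<epsilon> * pmf (Pi_pmf UNIV 0 (\<lambda>i. sign_pmf C (?q u2 i))) f" for f
  proof -
    have "(\<Prod>i\<in>UNIV. pmf (sign_pmf C (?q u1 i)) (f i)) \<le> (\<Prod>i\<in>UNIV. ?x * pmf (sign_pmf C (?q u2 i)) (f i))"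
      using assms(2)
      by (intro prod_mono conjI pmf_nonneg pmf_sign_pmf_ratio[OF assms(1)] prs_sign_prob_bounds[OF assms]) simp
    also have "\<dots> = exp \<epsilon> * (\<Prod>i\<in>UNIV. pmf (sign_pmf C (?q u2 i)) (f i))"
      by (simp add: prod.distrib exp_of_nat_mult[symmetric])
    finally show ?thesis by (simp add: pmf_Pi)
  qed
  then show ?thesis
    unfolding prs_signs_pmf_eq by (intro measure_ratio_le_map_pmf measure_ratio_le_pmf) simp_all
qed

lemma prs_mech_eq:
  "prs_mech k C \<epsilon> g = measure_pmf (prs_matrix_pmf \<bind>
     (\<lambda>M. map_pmf (\<lambda>s. transpose M *v s) (prs_signs_pmf k C \<epsilon> (M *v g))))"
  unfolding prs_mech_def map_pmf_def ..

lemma prs_mech_ratio: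
  assumes "0 < C" "0 \<le> \<epsilon>"
  shows "measure_ratio_le (exp \<epsilon>) (prs_mech TYPE('k::finite) C \<epsilon> x) (prs_mech TYPE('k) C \<epsilon> y)"
  unfolding prs_mech_eq measure_pmf_bind
  by (intro measure_ratio_le_bind_right[where R="count_space UNIV"] measure_ratio_le_map_pmf
      prs_signs_pmf_ratio assms)
    (simp_all add: space_subprob_algebra subprob_space_measure_pmf)

lemma finite_set_pmf_prs_matrix: "finite (set_pmf (prs_matrix_pmf :: (real^'d^'k) pmf))"
  by (simp add: prs_matrix_pmf_def prs_entry_pmf_def set_Pi_pmf finite_PiE_dflt)

lemma measurable_emeasure_prs_signs_pmf:
  assumes "0 < C" "0 \<le> \<epsilon>"
  shows "(\<lambda>u. emeasure (measure_pmf (prs_signs_pmf TYPE('k::finite) C \<epsilon> u)) B) \<in> borel_measurable borel"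
proof -
  let ?q = "prs_sign_prob C \<epsilon>"
  have "(\<lambda>u. emeasure (measure_pmf (Pi_pmf UNIV 0 (\<lambda>i. sign_pmf C (?q u i)))) ((\<lambda>f. \<chi> i. f i) -` B))
      \<in> borel_measurable borel"
  proof (rule measurable_emeasure_pmf_finite_support)
    show "finite (PiE_dflt (UNIV :: 'k set) 0 (\<lambda>_. {C, - C}))" by auto
    show "set_pmf (Pi_pmf UNIV 0 (\<lambda>i. sign_pmf C (?q u i))) \<subseteq> PiE_dflt UNIV 0 (\<lambda>_. {C, - C})" for u
      using set_pmf_sign_pmf by (auto simp: set_Pi_pmf PiE_dflt_def)
    have [measurable]: "(\<lambda>u. ?q u i) \<in> borel_measurable borel" for i
      unfolding prs_sign_prob_def prs_prob_def by measurable
    have pmf_sign: "pmf (sign_pmf C (?q u i)) v = (if v = C then ?q u i else if v = - C then 1 - ?q u i else 0)"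
      for u :: "real^'k" and i v
      by (rule pmf_sign_pmf[OF assms(1) prs_sign_prob_bounds(3,4)[OF assms]])
    show "(\<lambda>u. pmf (Pi_pmf UNIV 0 (\<lambda>i. sign_pmf C (?q u i))) f) \<in> borel_measurable borel"
      for f :: "'k \<Rightarrow> real"
      by (simp add: pmf_Pi pmf_sign)
  qed
  then show ?thesis
    by (simp add: prs_signs_pmf_eq)
qed

lemma measurable_prs_mech:
  assumes "0 < C" "0 \<le> \<epsilon>"
  shows "prs_mech TYPE('k::finite) C \<epsilon>
    \<in> (borel :: (real^'d) measure) \<rightarrow>\<^sub>M subprob_algebra (count_space UNIV)"
proof (rule measurable_subprob_algebra)
  fix A :: "(real^'d) set"
  have "emeasure (prs_mech TYPE('k) C \<epsilon> g) A = (\<Sum>M\<in>set_pmf prs_matrix_pmf.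
      emeasure (measure_pmf (prs_signs_pmf TYPE('k) C \<epsilon> (M *v g))) ((\<lambda>s. transpose M *v s) -` A)
        * pmf prs_matrix_pmf M)" for g
    by (simp add: prs_mech_eq nn_integral_measure_pmf_finite[OF finite_set_pmf_prs_matrix])
  moreover have "(\<lambda>g. emeasure (measure_pmf (prs_signs_pmf TYPE('k) C \<epsilon> (M *v g))) B) \<in> borel_measurable borel"
    for B and M :: "real^'d^'k"
    by (rule measurable_compose[OF _ measurable_emeasure_prs_signs_pmf[OF assms]])
      (intro borel_measurable_continuous_onI linear_continuous_on matrix_vector_mul_bounded_linear)
  ultimately show "(\<lambda>g. emeasure (prs_mech TYPE('k) C \<epsilon> g) A) \<in> borel_measurable borel"
    by simp
qed (simp_all add: prs_mech_eq subprob_space_measure_pmf)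

theorem theorem3:
  fixes \<epsilon> C \<eta> :: real and bmax N n :: nat
    and init :: "(real^'d) measure"
    and K :: "nat \<Rightarrow> 'psi \<Rightarrow> real^'d \<Rightarrow> (real^'d) measure"
    and Q :: "real^'d \<Rightarrow> (real^'d) measure"
    and \<psi> :: "nat \<Rightarrow> 'psi" and a b :: 'psi
  assumes "\<epsilon> > 0" and "C > 0" and "\<eta> > 0" and "bmax \<ge> 1"
    and "CARD('k) \<le> CARD('d)"
    and "Q = laplace_mech C \<epsilon> \<or> Q = prs_mech TYPE('k::finite) C \<epsilon>"
    and "prob_space init" and "sets init = sets borel"
    and "\<And>m p. K m p \<in> borel \<rightarrow>\<^sub>M prob_algebra borel"
    and "1 \<le> n" and "n \<le> N"
  shows "(\<forall>E\<in>sets pgc_space.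
            emeasure (pgc_transcript init K Q bmax \<eta> (\<psi>(n := a)) N) E
              \<le> ennreal (exp \<epsilon>) * emeasure (pgc_transcript init K Q bmax \<eta> (\<psi>(n := b)) N) E)
       \<and> (\<forall>\<theta>'. \<forall>G\<in>sets (borel :: (real^'d) measure).
            emeasure (K n a \<theta>' \<bind> Q) G \<le> ennreal (exp \<epsilon>) * emeasure (K n b \<theta>' \<bind> Q) G)"
proof -
  obtain R where Q: "Q \<in> borel \<rightarrow>\<^sub>M subprob_algebra R"
    and R: "sets (borel :: (real^'d) measure) \<subseteq> sets R"
    and Q_ratio: "\<And>x y. measure_ratio_le (exp \<epsilon>) (Q x) (Q y)"
    using \<open>Q = laplace_mech C \<epsilon> \<or> Q = prs_mech TYPE('k) C \<epsilon>\<close>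
  proof
    assume "Q = laplace_mech C \<epsilon>"
    then show ?thesis
      by (intro that[of borel]) (simp_all add: measurable_laplace_mech laplace_mech_ratio assms(1,2))
  next
    assume "Q = prs_mech TYPE('k) C \<epsilon>"
    then show ?thesis
      using measurable_prs_mech prs_mech_ratio assms(2) less_imp_le[OF assms(1)]
      by (intro that[of "count_space UNIV"]) simp_all
  qed
  interpret pgc_kernels K Q R
    using assms(9) Q R by unfold_locales
  have "measure_ratio_le (exp \<epsilon>) (pgc_transcript init K Q bmax \<eta> (\<psi>(n := a)) N)
      (pgc_transcript init K Q bmax \<eta> (\<psi>(n := b)) N)"
    using assms(10,11) by (intro pgc_transcript_ratio[OF Q_ratio assms(8)]) simp_all
  moreover have "measure_ratio_le (exp \<epsilon>) (K n a \<theta> \<bind> Q) (K n b \<theta> \<bind> Q)" for \<theta>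
    using Q_ratio by (rule K_bind_ratio)
  ultimately show ?thesis
    using R sets_K_bind by (auto simp: measure_ratio_le_def pgc_transcript_def)
qed

end
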